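(* Let $k>1$, $n=k-1$, $N=2n+1$, and let $m_1,\dots,m_k$ be positive integers with $M=\mathrm{diag}(m_1,\dots,m_k)$. Let $P\in\mathbb{R}^{N\times k}$ be the deterministic transition matrix in which, for each $\ell\in[k-1]$, the row of the intervention $do(X^0_\ell=1)$ is the $\ell$-th standard basis vector $e_\ell$, and the rows of all the other $N-(k-1)$ interventions equal $e_k$. Then $$\lambda:=\min_{f}\left\|PM^{1/2}(P^\top f)^{\circ-1/2}\right\|_\infty^2=\sum_{\ell\in[k]}m_\ell,$$ the minimum being over frequency vectors $f$.
   Context: A frequency vector is $f\in\mathbb{R}^N$ with $f\ge0$ and $\sum_a f_a=1$. For a vector $x$ with nonnegative entries, $x^{\circ-1/2}$ is the vector with entries $x_i^{-1/2}$ (interpreted as $+\infty$ when $x_i=0$). Rows of $P$ are indexed by the $N$ atomic interventions at state $0$, namely $do()$ and $do(X^0_j=0),do(X^0_j=1)$ for $j\in[n]$; columns by the intermediate states $[k]$. *)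

theory Defs
  imports "HOL-Analysis.Analysis" "HOL-Library.Extended_Real"
begin

text \<open>Atomic interventions at state 0: do(), and do(X_j = b) for j in [n], b in {0,1}
  (False = value 0, True = value 1).\<close>
datatype intv = DoEmpty | DoX nat bool

definition interventions :: "nat \<Rightarrow> intv set" where
  "interventions n = {DoEmpty} \<union> {DoX j b | j b. j \<in> {1..n}}"

definition freq_vec :: "'r set \<Rightarrow> ('r \<Rightarrow> real) \<Rightarrow> bool" where
  "freq_vec R f \<longleftrightarrow> (\<forall>a\<in>R. f a \<ge> 0) \<and> (\<Sum>a\<in>R. f a) = 1"

definition inv_sqrt :: "real \<Rightarrow> ereal" where
  "inv_sqrt x = (if x = 0 then \<infinity> else ereal (1 / sqrt x))"

definition col_mass :: "'r set \<Rightarrow> ('r \<Rightarrow> nat \<Rightarrow> real) \<Rightarrow> ('r \<Rightarrow> real) \<Rightarrow> nat \<Rightarrow> real" where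
  "col_mass R P f j = (\<Sum>a\<in>R. P a j * f a)"

definition obj_vec :: "nat \<Rightarrow> 'r set \<Rightarrow> ('r \<Rightarrow> nat \<Rightarrow> real) \<Rightarrow> (nat \<Rightarrow> nat) \<Rightarrow> ('r \<Rightarrow> real) \<Rightarrow> 'r \<Rightarrow> ereal" where
  "obj_vec k R P m f a =
     (\<Sum>j\<in>{1..k}. ereal (P a j) * (ereal (sqrt (real (m j))) * inv_sqrt (col_mass R P f j)))"

definition objective :: "nat \<Rightarrow> 'r set \<Rightarrow> ('r \<Rightarrow> nat \<Rightarrow> real) \<Rightarrow> (nat \<Rightarrow> nat) \<Rightarrow> ('r \<Rightarrow> real) \<Rightarrow> ereal" where
  "objective k R P m f = (Max ((\<lambda>a. \<bar>obj_vec k R P m f a\<bar>) ` R)) ^ 2"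

definition P_det :: "nat \<Rightarrow> intv \<Rightarrow> nat \<Rightarrow> real" where
  "P_det k a j = (case a of
      DoX l True \<Rightarrow> (if 1 \<le> l \<and> l \<le> k - 1 then (if j = l then 1 else 0) else (if j = k then 1 else 0))
    | _ \<Rightarrow> (if j = k then 1 else 0))"

end

theory Submission imports Defs begin

text \<open>For a deterministic transition matrix, whose row \<open>a\<close> is the basis vector of column
  \<open>c a\<close>, the entry \<open>(P\<^sup>T f)\<^sub>j = q\<^sub>j\<close> is the mass that \<open>f\<close> puts on the rows sent to \<open>j\<close>,
  and the objective is \<open>max\<^sub>j m\<^sub>j / q\<^sub>j\<close>. As the \<open>q\<^sub>j\<close> sum to \<open>1\<close>, some \<open>q\<^sub>j\<close> is at most
  \<open>m\<^sub>j / \<Sum>m\<close>, so the objective is at least \<open>\<Sum>m\<close>; when every column is the image of some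
  row, \<open>f\<close> can be chosen with \<open>q\<^sub>j = m\<^sub>j / \<Sum>m\<close> for all \<open>j\<close>, and then equality holds.\<close>

definition det_matrix :: "('r \<Rightarrow> nat) \<Rightarrow> 'r \<Rightarrow> nat \<Rightarrow> real" where
  "det_matrix c a j = (if j = c a then 1 else 0)"

definition scaled_inv_sqrt :: "(nat \<Rightarrow> nat) \<Rightarrow> (nat \<Rightarrow> real) \<Rightarrow> nat \<Rightarrow> ereal" where
  "scaled_inv_sqrt m q j = ereal (sqrt (real (m j))) * inv_sqrt (q j)"

lemma scaled_inv_sqrt_ge:
  assumes "0 < m j" and "0 \<le> q j" and "q j * S \<le> real (m j)"
  shows "ereal (sqrt S) \<le> scaled_inv_sqrt m q j"
proof (cases "q j = 0")
  case True
  then show ?thesis using assms(1) by (simp add: scaled_inv_sqrt_def inv_sqrt_def)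
next
  case False
  with assms(2) have "0 < q j" by simp
  with assms(3) have "sqrt S \<le> sqrt (real (m j) / q j)" by (simp add: field_simps)
  then show ?thesis using False by (simp add: scaled_inv_sqrt_def inv_sqrt_def real_sqrt_divide)
qed

lemma scaled_inv_sqrt_proportional:
  assumes "0 < m j" and "0 < S"
  shows "scaled_inv_sqrt m (\<lambda>j. real (m j) / S) j = ereal (sqrt S)"
  using assms by (simp add: scaled_inv_sqrt_def inv_sqrt_def real_sqrt_divide field_simps)

lemma exists_share_le:
  fixes q x :: "'a \<Rightarrow> real"
  assumes "finite K" and "K \<noteq> {}" and "(\<Sum>j\<in>K. q j) = 1"
  shows "\<exists>j\<in>K. q j * (\<Sum>i\<in>K. x i) \<le> x j"
proof (rule ccontr)
  assume "\<not> ?thesis"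
  then have "(\<Sum>j\<in>K. x j) < (\<Sum>j\<in>K. q j * (\<Sum>i\<in>K. x i))"
    using assms(1,2) by (intro sum_strict_mono) auto
  also have "\<dots> = (\<Sum>i\<in>K. x i)"
    using assms(3) by (simp add: sum_distrib_right[symmetric])
  finally show False by simp
qed

lemma ereal_power2_mono: "ereal r \<le> x \<Longrightarrow> 0 \<le> r \<Longrightarrow> ereal (r\<^sup>2) \<le> x\<^sup>2"
  by (cases x) (auto simp: power_mono)

lemma col_mass_det_matrix:
  assumes "finite R"
  shows "col_mass R (det_matrix c) f j = (\<Sum>a\<in>{a\<in>R. c a = j}. f a)"
  unfolding col_mass_def det_matrix_def sum.inter_filter[OF assms]
  by (rule sum.cong) auto

lemma sum_col_mass_det_matrix:
  assumes "finite R" and "finite K" and "c ` R \<subseteq> K"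
  shows "(\<Sum>j\<in>K. col_mass R (det_matrix c) f j) = (\<Sum>a\<in>R. f a)"
  using sum.group[OF assms] by (simp add: col_mass_det_matrix[OF assms(1)])

lemma obj_vec_det_matrix:
  assumes "c a \<in> {1..k}"
  shows "obj_vec k R (det_matrix c) m f a = scaled_inv_sqrt m (col_mass R (det_matrix c) f) (c a)"
proof -
  have "obj_vec k R (det_matrix c) m f a
      = (\<Sum>j\<in>{1..k}. if j = c a then scaled_inv_sqrt m (col_mass R (det_matrix c) f) j else 0)"
    unfolding obj_vec_def det_matrix_def scaled_inv_sqrt_def by (rule sum.cong) auto
  then show ?thesis using assms by simp
qed

lemma objective_det_matrix:
  assumes "c ` R = {1..k}"
  shows "objective k R (det_matrix c) m f
    = (Max ((\<lambda>j. \<bar>scaled_inv_sqrt m (col_mass R (det_matrix c) f) j\<bar>) ` {1..k}))\<^sup>2"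
proof -
  let ?g = "\<lambda>j. \<bar>scaled_inv_sqrt m (col_mass R (det_matrix c) f) j\<bar>"
  have "c a \<in> {1..k}" if "a \<in> R" for a
    using assms that by blast
  then have "(\<lambda>a. \<bar>obj_vec k R (det_matrix c) m f a\<bar>) ` R = (\<lambda>a. ?g (c a)) ` R"
    by (intro image_cong) (simp_all add: obj_vec_det_matrix)
  also have "\<dots> = ?g ` {1..k}"
    by (simp only: assms[symmetric] image_image)
  finally show ?thesis by (simp add: objective_def)
qed

lemma objective_det_matrix_lower_bound:
  assumes "finite R" and "c ` R = {1..k}" and "\<forall>l\<in>{1..k}. 0 < m l" and "freq_vec R f"
  shows "ereal (\<Sum>l\<in>{1..k}. real (m l)) \<le> objective k R (det_matrix c) m f"
proof -
  let ?S = "\<Sum>l\<in>{1..k}. real (m l)"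
  let ?q = "col_mass R (det_matrix c) f"
  have "(\<Sum>j\<in>{1..k}. ?q j) = 1"
    using assms(1,2,4) by (simp add: sum_col_mass_det_matrix freq_vec_def)
  moreover from this have "{1..k} \<noteq> ({} :: nat set)" by (metis sum.empty zero_neq_one)
  ultimately obtain j where j: "j \<in> {1..k}" and share: "?q j * ?S \<le> real (m j)"
    using exists_share_le[of "{1..k}" ?q] by blast
  have "0 \<le> ?q j"
    using assms(4) unfolding col_mass_det_matrix[OF assms(1)] freq_vec_def
    by (auto intro: sum_nonneg)
  then have "ereal (sqrt ?S) \<le> scaled_inv_sqrt m ?q j"
    using j share assms(3) by (intro scaled_inv_sqrt_ge) auto
  also have "\<dots> \<le> \<bar>scaled_inv_sqrt m ?q j\<bar>"
    by (cases "scaled_inv_sqrt m ?q j") auto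
  also have "\<dots> \<le> Max ((\<lambda>j. \<bar>scaled_inv_sqrt m ?q j\<bar>) ` {1..k})"
    using j by (intro Max_ge) auto
  finally have "ereal ((sqrt ?S)\<^sup>2) \<le> (Max ((\<lambda>j. \<bar>scaled_inv_sqrt m ?q j\<bar>) ` {1..k}))\<^sup>2"
    by (rule ereal_power2_mono) (simp add: sum_nonneg)
  then show ?thesis
    using assms(2) by (simp add: objective_det_matrix sum_nonneg)
qed

text \<open>The minimiser spreads the mass \<open>m\<^sub>j / \<Sum>m\<close> of column \<open>j\<close> uniformly over the rows sent
  to \<open>j\<close>.\<close>

lemma objective_det_matrix_attained:
  assumes "finite R" and "c ` R = {1..k}" and "0 < k" and "\<forall>l\<in>{1..k}. 0 < m l"
  shows "\<exists>f. freq_vec R f \<and> objective k R (det_matrix c) m f = ereal (\<Sum>l\<in>{1..k}. real (m l))"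
proof -
  define S where "S = (\<Sum>l\<in>{1..k}. real (m l))"
  define fibre where "fibre j = {a\<in>R. c a = j}" for j
  define f where "f a = real (m (c a)) / (S * card (fibre (c a)))" for a
  have "0 < S"
    unfolding S_def using assms(3,4) by (intro sum_pos) auto
  have mass: "col_mass R (det_matrix c) f j = real (m j) / S" if "j \<in> {1..k}" for j
  proof -
    have "fibre j \<noteq> {}"
      using that assms(2) unfolding fibre_def by (metis (mono_tags) empty_iff imageE mem_Collect_eq)
    moreover have "finite (fibre j)" using assms(1) unfolding fibre_def by simp
    ultimately have "card (fibre j) \<noteq> 0" by simp
    have "(\<Sum>a\<in>fibre j. f a) = (\<Sum>a\<in>fibre j. real (m j) / (S * card (fibre j)))"
      by (rule sum.cong) (simp_all add: f_def fibre_def)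
    also have "\<dots> = real (m j) / S"
      using \<open>card (fibre j) \<noteq> 0\<close> by simp
    finally have "(\<Sum>a\<in>fibre j. f a) = real (m j) / S" .
    then show ?thesis using assms(1) by (simp add: col_mass_det_matrix fibre_def)
  qed
  have "freq_vec R f"
  proof -
    have "(\<Sum>a\<in>R. f a) = (\<Sum>j\<in>{1..k}. col_mass R (det_matrix c) f j)"
      using assms(1,2) by (simp add: sum_col_mass_det_matrix)
    also have "\<dots> = (\<Sum>j\<in>{1..k}. real (m j) / S)"
      by (simp add: mass)
    also have "\<dots> = 1"
      using \<open>0 < S\<close> by (simp add: S_def sum_divide_distrib[symmetric])
    finally show ?thesis
      using \<open>0 < S\<close> by (simp add: freq_vec_def f_def)
  qed
  moreover have "objective k R (det_matrix c) m f = ereal S"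
  proof -
    have "(\<lambda>j. \<bar>scaled_inv_sqrt m (col_mass R (det_matrix c) f) j\<bar>) ` {1..k}
        = (\<lambda>j. ereal (sqrt S)) ` {1..k}"
      using assms(4) \<open>0 < S\<close> scaled_inv_sqrt_proportional[of m _ S]
      by (intro image_cong) (simp_all add: scaled_inv_sqrt_def mass)
    also have "\<dots> = {ereal (sqrt S)}"
      using assms(3) by (intro image_constant[of 1]) simp
    finally show ?thesis
      using assms(2) \<open>0 < S\<close> by (simp add: objective_det_matrix)
  qed
  ultimately show ?thesis
    unfolding S_def by blast
qed

definition P_det_col :: "nat \<Rightarrow> intv \<Rightarrow> nat" where
  "P_det_col k a = (case a of DoX l True \<Rightarrow> (if 1 \<le> l \<and> l \<le> k - 1 then l else k) | _ \<Rightarrow> k)"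

lemma P_det_eq_det_matrix: "P_det k = det_matrix (P_det_col k)"
  by (auto simp: fun_eq_iff P_det_def det_matrix_def P_det_col_def split: intv.splits bool.splits)

lemma finite_interventions: "finite (interventions n)"
proof -
  have "interventions n \<subseteq> insert DoEmpty (case_prod DoX ` ({1..n} \<times> UNIV))"
    by (auto simp: interventions_def)
  then show ?thesis by (rule finite_subset) simp
qed

lemma P_det_col_image:
  assumes "0 < k"
  shows "P_det_col k ` interventions (k - 1) = {1..k}"
proof
  show "P_det_col k ` interventions (k - 1) \<subseteq> {1..k}"
    using assms by (auto simp: P_det_col_def split: intv.splits bool.splits)
  show "{1..k} \<subseteq> P_det_col k ` interventions (k - 1)"
  proof
    fix j assume j: "j \<in> {1..k}"
    show "j \<in> P_det_col k ` interventions (k - 1)"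
    proof (cases "j = k")
      case True
      then show ?thesis
        by (intro image_eqI[of _ _ DoEmpty]) (simp_all add: P_det_col_def interventions_def)
    next
      case False
      then show ?thesis using j
        by (intro image_eqI[of _ _ "DoX j True"]) (auto simp: P_det_col_def interventions_def)
    qed
  qed
qed

theorem proposition4:
  fixes k :: nat and m :: "nat \<Rightarrow> nat"
  assumes "k > 1"
    and "\<forall>l\<in>{1..k}. m l > 0"
  shows "(\<exists>f. freq_vec (interventions (k - 1)) f \<and>
             objective k (interventions (k - 1)) (P_det k) m f = ereal (\<Sum>l\<in>{1..k}. real (m l)))
       \<and> (\<forall>f. freq_vec (interventions (k - 1)) f \<longrightarrow>
             ereal (\<Sum>l\<in>{1..k}. real (m l)) \<le> objective k (interventions (k - 1)) (P_det k) m f)"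
proof -
  have "0 < k" using assms(1) by simp
  note columns = finite_interventions P_det_col_image[OF \<open>0 < k\<close>]
  show ?thesis
    unfolding P_det_eq_det_matrix
    using objective_det_matrix_attained[OF columns \<open>0 < k\<close> assms(2)]
      objective_det_matrix_lower_bound[OF columns assms(2)]
    by blast
qed

end
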